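(* Let $\mathbb{K}$ be a field, $S=\mathbb{K}[x_1,\ldots,x_n]$, and let $I\subseteq S$ be a support-$2$ monomial ideal which is a Simis ideal and whose irreducible decomposition is minimal. Assume that $\alpha_{i,j}=1$ for every edge $\{x_i,x_j\}$ of $G(I)$. Then there exist a Simis square-free monomial ideal $J\subseteq S$ and a standard linear weighting $w$ of $S$ such that $I=J_w$.
   Context: For a monomial ideal $I$, $\mathcal{G}(I)$ denotes its minimal set of monomial generators. $I$ is a support-$2$ monomial ideal if $\mathcal{G}(I)\subseteq\{x_i^ax_j^b : 1\le i<j\le n,\ a,b\ge 1\}$. The underlying simple graph $G(I)$ has vertices $x_1,\ldots,x_n$ and an edge $\{x_i,x_j\}$ whenever some element of $\mathcal{G}(I)$ has support $\{x_i,x_j\}$. For an edge $\{x_i,x_j\}$, $\alpha_{i,j}$ is the number of elements of $\mathcal{G}(I)$ whose support is exactly $\{x_i,x_j\}$. Symbolic power: $I^{(s)}=\bigcap_{P\in\mathrm{MinAss}(I)}(I^sS_P\cap S)$ over the minimal primes of $I$; $I$ is Simis if $I^{(s)}=I^s$ for all $s\ge 1$. Irreducible monomial ideals are those generated by pure powers of variables; every monomial ideal has a unique irredundant decomposition $I=\bigcap Q_i$ into irreducible monomial ideals, called minimal if $\sqrt{Q_i}\ne\sqrt{Q_j}$ for $i\neq j$. A standard linear weighting is $w(a_1,\ldots,a_n)=(d_1a_1,\ldots,d_na_n)$ with fixed positive integers $d_i$, and for a monomial ideal $J$, $J_w$ is generated by the monomials obtained from $\mathcal{G}(J)$ by replacing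 each $x_i$ by $x_i^{d_i}$. *)

theory Defs
  imports Main
begin

text \<open>Monomials of S = K[x_0,...,x_{n-1}] are exponent vectors nat => nat vanishing
  outside {..<n}. A monomial ideal is represented by the set of monomials it contains
  (it is spanned over K by them); all notions below are the monomial-level translations.\<close>

definition mons :: "nat \<Rightarrow> (nat \<Rightarrow> nat) set" where
  "mons n = {a. \<forall>i\<ge>n. a i = 0}"

definition supp :: "(nat \<Rightarrow> nat) \<Rightarrow> nat set" where
  "supp a = {i. a i \<noteq> 0}"

definition is_mono_ideal :: "nat \<Rightarrow> (nat \<Rightarrow> nat) set \<Rightarrow> bool" where
  "is_mono_ideal n I \<longleftrightarrow> I \<subseteq> mons n \<and> (\<forall>a\<in>I. \<forall>b\<in>mons n. a \<le> b \<longrightarrow> b \<in> I)"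

definition ideal_of :: "nat \<Rightarrow> (nat \<Rightarrow> nat) set \<Rightarrow> (nat \<Rightarrow> nat) set" where
  "ideal_of n G = {m \<in> mons n. \<exists>g\<in>G. g \<le> m}"

definition mingens :: "(nat \<Rightarrow> nat) set \<Rightarrow> (nat \<Rightarrow> nat) set" where
  "mingens I = {g \<in> I. \<forall>h\<in>I. h \<le> g \<longrightarrow> h = g}"

definition support2 :: "nat \<Rightarrow> (nat \<Rightarrow> nat) set \<Rightarrow> bool" where
  "support2 n I \<longleftrightarrow> is_mono_ideal n I \<and> (\<forall>g\<in>mingens I. card (supp g) = 2)"

definition alpha :: "(nat \<Rightarrow> nat) set \<Rightarrow> nat \<Rightarrow> nat \<Rightarrow> nat" where
  "alpha I i j = card {g \<in> mingens I. supp g = {i, j}}"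

definition edges :: "(nat \<Rightarrow> nat) set \<Rightarrow> nat set set" where
  "edges I = supp ` mingens I"

fun mpow :: "nat \<Rightarrow> (nat \<Rightarrow> nat) set \<Rightarrow> nat \<Rightarrow> (nat \<Rightarrow> nat) set" where
  "mpow n I 0 = mons n"
| "mpow n I (Suc s) = {(\<lambda>i. a i + b i) | a b. a \<in> I \<and> b \<in> mpow n I s}"

definition primeA :: "nat \<Rightarrow> nat set \<Rightarrow> (nat \<Rightarrow> nat) set" where
  "primeA n A = {m \<in> mons n. \<exists>i\<in>A. m i \<noteq> 0}"

text \<open>minimal primes of a monomial ideal (these are the minimal monomial primes containing it)\<close>
definition minprimes :: "nat \<Rightarrow> (nat \<Rightarrow> nat) set \<Rightarrow> nat set set" where
  "minprimes n I = {A. A \<subseteq> {..<n} \<and> I \<subseteq> primeA n A \<and>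
                      (\<forall>B. B \<subset> A \<longrightarrow> \<not> I \<subseteq> primeA n B)}"

text \<open>J S_P \<inter> S for P = P_A: monomials m with v*m in J for some monomial v not in P\<close>
definition localize :: "nat \<Rightarrow> nat set \<Rightarrow> (nat \<Rightarrow> nat) set \<Rightarrow> (nat \<Rightarrow> nat) set" where
  "localize n A J = {m \<in> mons n. \<exists>v\<in>mons n. (\<forall>i\<in>A. v i = 0) \<and> (\<lambda>i. m i + v i) \<in> J}"

definition symb_pow :: "nat \<Rightarrow> (nat \<Rightarrow> nat) set \<Rightarrow> nat \<Rightarrow> (nat \<Rightarrow> nat) set" where
  "symb_pow n I s = mons n \<inter> (\<Inter>A\<in>minprimes n I. localize n A (mpow n I s))"

definition simis :: "nat \<Rightarrow> (nat \<Rightarrow> nat) set \<Rightarrow> bool" where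
  "simis n I \<longleftrightarrow> (\<forall>s\<ge>1. symb_pow n I s = mpow n I s)"

definition irreducible_mono :: "nat \<Rightarrow> (nat \<Rightarrow> nat) set \<Rightarrow> bool" where
  "irreducible_mono n Q \<longleftrightarrow> (\<exists>G. finite G \<and> G \<noteq> {} \<and> G \<subseteq> mons n \<and>
       (\<forall>g\<in>G. card (supp g) = 1) \<and> Q = ideal_of n G)"

definition radical :: "nat \<Rightarrow> (nat \<Rightarrow> nat) set \<Rightarrow> (nat \<Rightarrow> nat) set" where
  "radical n Q = {m \<in> mons n. \<exists>k\<ge>1. (\<lambda>i. k * m i) \<in> Q}"

definition minimal_irr_decomp :: "nat \<Rightarrow> (nat \<Rightarrow> nat) set \<Rightarrow> bool" where
  "minimal_irr_decomp n I \<longleftrightarrow> (\<exists>\<Q>. finite \<Q> \<and> (\<forall>Q\<in>\<Q>. irreducible_mono n Q) \<and>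
      I = mons n \<inter> \<Inter>\<Q> \<and>
      (\<forall>Q\<in>\<Q>. I \<noteq> mons n \<inter> \<Inter>(\<Q> - {Q})) \<and>
      (\<forall>Q1\<in>\<Q>. \<forall>Q2\<in>\<Q>. Q1 \<noteq> Q2 \<longrightarrow> radical n Q1 \<noteq> radical n Q2))"

definition squarefree_mono :: "nat \<Rightarrow> (nat \<Rightarrow> nat) set \<Rightarrow> bool" where
  "squarefree_mono n J \<longleftrightarrow> is_mono_ideal n J \<and> (\<forall>g\<in>mingens J. \<forall>i. g i \<le> 1)"

definition weighted :: "nat \<Rightarrow> (nat \<Rightarrow> nat) \<Rightarrow> (nat \<Rightarrow> nat) set \<Rightarrow> (nat \<Rightarrow> nat) set" where
  "weighted n d J = ideal_of n ((\<lambda>g i. d i * g i) ` mingens J)"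

end

theory Submission
  imports Defs
begin

(* Since alpha = 1, a minimal generator of I is determined by its support, an edge of G(I).
   The Simis property forces two generators sharing a variable x_i to carry the same exponent
   on x_i: if g = x_i^a x_j^c and h = x_i^b x_k^e with a < b, then g h / x_i lies in the second
   symbolic power (checked at each minimal prime through its irreducible component), hence in
   I^2, which produces a generator f on the edge {j, k} with f^2 dividing g h / x_i; running the
   same argument on the triangle through f and g returns h with 2b <= a. So the exponent of x_i
   is a well defined weight d_i and I is the d-weighting of the squarefree ideal J of supports.
   Weighting commutes with products, localization and minimal primes, so J is Simis. *)

section \<open>Monomial ideals and their products\<close>

lemma mingens_subset: "mingens I \<subseteq> I"
  by (auto simp: mingens_def)

lemma exists_mingen_le:
  assumes I: "is_mono_ideal n I" and x: "x \<in> I"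
  shows "\<exists>g\<in>mingens I. g \<le> x"
proof -
  let ?size = "\<lambda>y::nat\<Rightarrow>nat. \<Sum>l<n. y l"
  obtain y where y: "y \<in> I" "y \<le> x" and least: "\<forall>z. z \<in> I \<and> z \<le> x \<longrightarrow> ?size y \<le> ?size z"
    using ex_has_least_nat[of "\<lambda>y. y \<in> I \<and> y \<le> x" x ?size] x by blast
  have "h = y" if h: "h \<in> I" "h \<le> y" for h
  proof (rule ccontr)
    assume "h \<noteq> y"
    then obtain l where l: "h l \<noteq> y l" by blast
    have "h \<in> mons n" "y \<in> mons n" using h y I by (auto simp: is_mono_ideal_def)
    then have "l < n" using l unfolding mons_def by (metis (mono_tags) mem_Collect_eq not_less)
    have "h l < y l" using l h(2) by (simp add: le_fun_def order_less_le)
    then have "?size h < ?size y"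
      using sum_strict_mono_ex1[of "{..<n}" h y] h(2) \<open>l < n\<close> by (auto simp: le_fun_def)
    moreover have "h \<le> x" using h(2) y(2) by (rule order_trans)
    ultimately show False using least h(1) by auto
  qed
  then show ?thesis using y by (auto simp: mingens_def)
qed

lemma is_mono_ideal_ideal_of: "is_mono_ideal n (ideal_of n G)"
  by (auto simp: is_mono_ideal_def ideal_of_def intro: order_trans)

lemma ideal_of_self: "is_mono_ideal n I \<Longrightarrow> ideal_of n I = I"
  by (auto simp: is_mono_ideal_def ideal_of_def)

lemma ideal_of_mingens:
  assumes "is_mono_ideal n I"
  shows "ideal_of n (mingens I) = I"
  using assms exists_mingen_le[OF assms] mingens_subset[of I]
  by (auto simp: ideal_of_def is_mono_ideal_def)

lemma mingens_ideal_of_antichain: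
  assumes E: "E \<subseteq> mons n" and antichain: "\<And>x y. x \<in> E \<Longrightarrow> y \<in> E \<Longrightarrow> x \<le> y \<Longrightarrow> x = y"
  shows "mingens (ideal_of n E) = E"
proof
  show "mingens (ideal_of n E) \<subseteq> E"
  proof
    fix x assume x: "x \<in> mingens (ideal_of n E)"
    then obtain y where y: "y \<in> E" "y \<le> x" by (auto simp: mingens_def ideal_of_def)
    then have "y \<in> ideal_of n E" using E by (auto simp: ideal_of_def)
    then show "x \<in> E" using x y by (auto simp: mingens_def)
  qed
  show "E \<subseteq> mingens (ideal_of n E)"
  proof
    fix x assume x: "x \<in> E"
    have "h = x" if h: "h \<in> ideal_of n E" "h \<le> x" for h
    proof -
      obtain y where y: "y \<in> E" "y \<le> h" using h(1) unfolding ideal_of_def by blast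
      then have "y = x" using antichain[OF y(1) x] h(2) order_trans by blast
      then show "h = x" using h(2) y(2) by simp
    qed
    then show "x \<in> mingens (ideal_of n E)" using x E by (auto simp: mingens_def ideal_of_def)
  qed
qed

definition mprod :: "(nat \<Rightarrow> nat) set \<Rightarrow> (nat \<Rightarrow> nat) set \<Rightarrow> (nat \<Rightarrow> nat) set" where
  "mprod A B = {(\<lambda>i. a i + b i) | a b. a \<in> A \<and> b \<in> B}"

lemma mprodI: "a \<in> A \<Longrightarrow> b \<in> B \<Longrightarrow> (\<lambda>i. a i + b i) \<in> mprod A B"
  unfolding mprod_def by blast

lemma mpow_Suc_mprod: "mpow n I (Suc s) = mprod I (mpow n I s)"
  by (simp add: mprod_def)

lemma mprod_ideal_of:
  assumes "A \<subseteq> mons n"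
  shows "mprod (ideal_of n A) (ideal_of n B) = ideal_of n (mprod A B)"
proof
  show "mprod (ideal_of n A) (ideal_of n B) \<subseteq> ideal_of n (mprod A B)"
  proof
    fix x assume "x \<in> mprod (ideal_of n A) (ideal_of n B)"
    then obtain a b a' b' where x: "x = (\<lambda>i. a' i + b' i)" and ab: "a \<in> A" "b \<in> B"
      and le: "a \<le> a'" "b \<le> b'" and mons: "a' \<in> mons n" "b' \<in> mons n"
      unfolding mprod_def ideal_of_def by blast
    have "(\<lambda>i. a i + b i) \<le> x" using le unfolding x le_fun_def by (simp add: add_mono)
    moreover have "x \<in> mons n" using mons unfolding x mons_def by simp
    ultimately show "x \<in> ideal_of n (mprod A B)"
      using ab unfolding mprod_def ideal_of_def by blast
  qed
  show "ideal_of n (mprod A B) \<subseteq> mprod (ideal_of n A) (ideal_of n B)"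
  proof
    fix x assume "x \<in> ideal_of n (mprod A B)"
    then obtain a b where ab: "a \<in> A" "b \<in> B" "x \<in> mons n" "\<forall>i. a i + b i \<le> x i"
      by (auto simp: ideal_of_def mprod_def le_fun_def)
    have "a \<in> ideal_of n A" using ab(1) assms by (auto simp: ideal_of_def)
    moreover have "(\<lambda>i. x i - a i) \<in> ideal_of n B"
      using ab by (auto simp: ideal_of_def mons_def le_fun_def intro!: bexI[of _ b])
        (metis add_diff_cancel_left' diff_le_mono)
    moreover have "x = (\<lambda>i. a i + (x i - a i))"
      using ab(4) by (auto intro: le_add_diff_inverse[symmetric] add_leD1)
    ultimately show "x \<in> mprod (ideal_of n A) (ideal_of n B)" by (metis mprodI)
  qed
qed

lemma mpow_subset_mons: "I \<subseteq> mons n \<Longrightarrow> mpow n I s \<subseteq> mons n"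
  by (induction s) (auto simp: mons_def)

lemma is_mono_ideal_mpow:
  assumes I: "is_mono_ideal n I"
  shows "is_mono_ideal n (mpow n I s)"
proof (induction s)
  case 0
  then show ?case by (simp add: is_mono_ideal_def)
next
  case (Suc s)
  have "mpow n I (Suc s) = mprod (ideal_of n I) (ideal_of n (mpow n I s))"
    unfolding mpow_Suc_mprod using I Suc by (simp add: ideal_of_self)
  also have "\<dots> = ideal_of n (mprod I (mpow n I s))"
    using I by (simp add: mprod_ideal_of is_mono_ideal_def)
  finally show ?case by (simp add: is_mono_ideal_ideal_of)
qed

lemma mpow_one:
  assumes I: "is_mono_ideal n I"
  shows "mpow n I 1 = I"
proof
  show "mpow n I 1 \<subseteq> I"
  proof
    fix x assume "x \<in> mpow n I 1"
    then obtain a b where x: "x = (\<lambda>i. a i + b i)" and a: "a \<in> I" by auto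
    have "x \<in> mons n" using mpow_subset_mons[of I n 1] I \<open>x \<in> mpow n I 1\<close>
      by (auto simp: is_mono_ideal_def)
    moreover have "a \<le> x" unfolding x by (simp add: le_fun_def)
    ultimately show "x \<in> I" using I a unfolding is_mono_ideal_def by blast
  qed
  show "I \<subseteq> mpow n I 1"
  proof
    fix a assume "a \<in> I"
    moreover have "(\<lambda>_. 0) \<in> mpow n I 0" by (simp add: mons_def)
    ultimately have "(\<lambda>i. a i + 0) \<in> mprod I (mpow n I 0)" by (rule mprodI)
    then show "a \<in> mpow n I 1" unfolding One_nat_def mpow_Suc_mprod by simp
  qed
qed

lemma mpow_two: "is_mono_ideal n I \<Longrightarrow> mpow n I 2 = mprod I I"
  using mpow_Suc_mprod[of n I 1] mpow_one by (simp add: numeral_2_eq_2 del: mpow.simps)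

section \<open>Localization and symbolic powers\<close>

lemma primeA_upward:
  assumes "x \<in> primeA n A" "y \<in> mons n" "x \<le> y"
  shows "y \<in> primeA n A"
proof -
  obtain i where "i \<in> A" "x i \<noteq> 0" using assms(1) by (auto simp: primeA_def)
  moreover have "x i \<le> y i" using assms(3) by (simp add: le_fun_def)
  ultimately have "y i \<noteq> 0" by simp
  then show ?thesis using assms(2) \<open>i \<in> A\<close> unfolding primeA_def by blast
qed

lemma not_mem_primeA: "m \<in> mons n \<Longrightarrow> m \<notin> primeA n A \<longleftrightarrow> (\<forall>i\<in>A. m i = 0)"
  by (auto simp: primeA_def)

lemma subset_localize:
  assumes "K \<subseteq> mons n"
  shows "K \<subseteq> localize n A K"
proof
  fix m assume "m \<in> K"
  then show "m \<in> localize n A K"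
    using assms unfolding localize_def
    by (intro CollectI conjI bexI[of _ "\<lambda>_. 0"]) (auto simp: mons_def)
qed

lemma localize_upward:
  assumes K: "is_mono_ideal n K" and x: "x \<in> localize n A K" and y: "y \<in> mons n" and le: "x \<le> y"
  shows "y \<in> localize n A K"
proof -
  obtain v where v: "v \<in> mons n" "\<forall>i\<in>A. v i = 0" and xv: "(\<lambda>i. x i + v i) \<in> K"
    using x unfolding localize_def by blast
  have "(\<lambda>i. x i + v i) \<le> (\<lambda>i. y i + v i)" using le by (simp add: le_fun_def)
  moreover have "(\<lambda>i. y i + v i) \<in> mons n" using y v(1) by (simp add: mons_def)
  ultimately have "(\<lambda>i. y i + v i) \<in> K" using K xv unfolding is_mono_ideal_def by blast
  then show ?thesis unfolding localize_def using y v by blast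
qed

lemma mprod_localize:
  assumes x: "x \<in> localize n A K" and y: "y \<in> localize n A L"
  shows "(\<lambda>i. x i + y i) \<in> localize n A (mprod K L)"
proof -
  obtain v where v: "v \<in> mons n" "\<forall>i\<in>A. v i = 0" and xv: "(\<lambda>i. x i + v i) \<in> K"
    using x unfolding localize_def by blast
  obtain w where w: "w \<in> mons n" "\<forall>i\<in>A. w i = 0" and yw: "(\<lambda>i. y i + w i) \<in> L"
    using y unfolding localize_def by blast
  have "(\<lambda>i. (x i + v i) + (y i + w i)) \<in> mprod K L" using xv yw by (rule mprodI)
  then have "(\<lambda>i. (x i + y i) + (v i + w i)) \<in> mprod K L" by (simp add: ac_simps)
  moreover have "(\<lambda>i. x i + y i) \<in> mons n" "(\<lambda>i. v i + w i) \<in> mons n"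
    using x y v(1) w(1) by (auto simp: localize_def mons_def)
  moreover have "\<forall>i\<in>A. v i + w i = 0" using v(2) w(2) by simp
  ultimately show ?thesis
    unfolding localize_def by (intro CollectI conjI bexI[of _ "\<lambda>i. v i + w i"]) simp_all
qed

lemma mem_symb_pow_twoI:
  assumes I: "is_mono_ideal n I" and m: "m \<in> mons n"
    and local: "\<And>A. A \<in> minprimes n I \<Longrightarrow>
      \<exists>a b. a \<in> localize n A I \<and> b \<in> localize n A I \<and> (\<lambda>i. a i + b i) \<le> m"
  shows "m \<in> symb_pow n I 2"
proof -
  have "m \<in> localize n A (mpow n I 2)" if A: "A \<in> minprimes n I" for A
  proof -
    obtain a b where ab: "a \<in> localize n A I" "b \<in> localize n A I" "(\<lambda>i. a i + b i) \<le> m"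
      using local[OF A] by blast
    have "(\<lambda>i. a i + b i) \<in> localize n A (mpow n I 2)"
      using mprod_localize[OF ab(1,2)] by (simp add: mpow_two[OF I])
    then show ?thesis using localize_upward[OF is_mono_ideal_mpow[OF I]] m ab(3) by blast
  qed
  then show ?thesis using m by (simp add: symb_pow_def)
qed

section \<open>Standard linear weightings\<close>

definition weight_mon :: "(nat \<Rightarrow> nat) \<Rightarrow> (nat \<Rightarrow> nat) \<Rightarrow> (nat \<Rightarrow> nat)" where
  "weight_mon d a = (\<lambda>i. d i * a i)"

lemma weight_mon_mons: "a \<in> mons n \<Longrightarrow> weight_mon d a \<in> mons n"
  by (simp add: mons_def weight_mon_def)

lemma weight_mon_add: "weight_mon d (\<lambda>i. a i + b i) = (\<lambda>i. weight_mon d a i + weight_mon d b i)"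
  by (simp add: weight_mon_def algebra_simps)

lemma weight_mon_mono: "a \<le> b \<Longrightarrow> weight_mon d a \<le> weight_mon d b"
  by (simp add: weight_mon_def le_fun_def)

lemma weight_mon_le_iff:
  assumes d: "\<forall>i<n. 0 < d i" and a: "a \<in> mons n"
  shows "weight_mon d a \<le> weight_mon d b \<longleftrightarrow> a \<le> b"
proof
  assume le: "weight_mon d a \<le> weight_mon d b"
  show "a \<le> b"
    unfolding le_fun_def
  proof
    fix i show "a i \<le> b i"
      using le_funD[OF le, of i] d a by (cases "i < n") (auto simp: weight_mon_def mons_def)
  qed
qed (rule weight_mon_mono)

lemma le_weight_mon:
  assumes "\<forall>i<n. 0 < d i" and "v \<in> mons n"
  shows "v \<le> weight_mon d v"
  unfolding le_fun_def weight_mon_def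
proof
  fix i show "v i \<le> d i * v i"
    using assms by (cases "i < n") (auto simp: mons_def)
qed

lemma weight_mon_image_mprod:
  "weight_mon d ` mprod A B = mprod (weight_mon d ` A) (weight_mon d ` B)"
proof
  show "weight_mon d ` mprod A B \<subseteq> mprod (weight_mon d ` A) (weight_mon d ` B)"
    unfolding mprod_def by (auto simp: weight_mon_add) blast
  show "mprod (weight_mon d ` A) (weight_mon d ` B) \<subseteq> weight_mon d ` mprod A B"
    unfolding mprod_def by (auto simp: weight_mon_add[symmetric]) blast
qed

lemma ideal_of_weight_mon_mons: "ideal_of n (weight_mon d ` mons n) = mons n"
proof -
  have "weight_mon d (\<lambda>_. 0) \<le> x" "(\<lambda>_. 0) \<in> mons n" for x
    by (simp_all add: weight_mon_def mons_def le_fun_def)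
  then show ?thesis
    unfolding ideal_of_def using weight_mon_mons by blast
qed

lemma mpow_ideal_of_weight_mon:
  assumes J: "J \<subseteq> mons n"
  shows "mpow n (ideal_of n (weight_mon d ` J)) s = ideal_of n (weight_mon d ` mpow n J s)"
proof (induction s)
  case 0
  then show ?case by (simp add: ideal_of_weight_mon_mons)
next
  case (Suc s)
  have "weight_mon d ` J \<subseteq> mons n" using J weight_mon_mons by blast
  then show ?case
    unfolding mpow_Suc_mprod Suc weight_mon_image_mprod by (rule mprod_ideal_of)
qed

lemma weighted_eq_ideal_of_weight_mon:
  assumes J: "is_mono_ideal n J"
  shows "weighted n d J = ideal_of n (weight_mon d ` J)"
proof -
  have "weighted n d J = ideal_of n (weight_mon d ` mingens J)"
    by (simp add: weighted_def weight_mon_def[abs_def])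
  also have "\<dots> = ideal_of n (weight_mon d ` J)"
  proof
    show "ideal_of n (weight_mon d ` mingens J) \<subseteq> ideal_of n (weight_mon d ` J)"
      using mingens_subset unfolding ideal_of_def by blast
    show "ideal_of n (weight_mon d ` J) \<subseteq> ideal_of n (weight_mon d ` mingens J)"
    proof
      fix x assume "x \<in> ideal_of n (weight_mon d ` J)"
      then obtain b where b: "b \<in> J" "weight_mon d b \<le> x" and x: "x \<in> mons n"
        unfolding ideal_of_def by blast
      obtain g where g: "g \<in> mingens J" "g \<le> b" using exists_mingen_le[OF J b(1)] by blast
      have "weight_mon d g \<le> x" using weight_mon_mono[OF g(2)] b(2) by (rule order_trans)
      then show "x \<in> ideal_of n (weight_mon d ` mingens J)"
        using g(1) x unfolding ideal_of_def by blast
    qed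
  qed
  finally show ?thesis .
qed

lemma weight_mon_mem_ideal_of_iff:
  assumes J: "is_mono_ideal n J" and d: "\<forall>i<n. 0 < d i" and m: "m \<in> mons n"
  shows "weight_mon d m \<in> ideal_of n (weight_mon d ` J) \<longleftrightarrow> m \<in> J"
proof
  assume "weight_mon d m \<in> ideal_of n (weight_mon d ` J)"
  then obtain b where "b \<in> J" "weight_mon d b \<le> weight_mon d m" unfolding ideal_of_def by blast
  moreover have "b \<in> mons n" using \<open>b \<in> J\<close> J by (simp add: is_mono_ideal_def subset_iff)
  ultimately have "b \<le> m" using weight_mon_le_iff[OF d] by simp
  then show "m \<in> J" using J m \<open>b \<in> J\<close> unfolding is_mono_ideal_def by blast
next
  assume "m \<in> J"
  then show "weight_mon d m \<in> ideal_of n (weight_mon d ` J)"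
    using weight_mon_mons[OF m] unfolding ideal_of_def by blast
qed

lemma weight_mon_mem_localize_iff:
  assumes J: "is_mono_ideal n J" and d: "\<forall>i<n. 0 < d i" and m: "m \<in> mons n"
  shows "weight_mon d m \<in> localize n A (ideal_of n (weight_mon d ` J)) \<longleftrightarrow> m \<in> localize n A J"
proof
  assume "m \<in> localize n A J"
  then obtain v where v: "v \<in> mons n" "\<forall>i\<in>A. v i = 0" and mv: "(\<lambda>i. m i + v i) \<in> J"
    unfolding localize_def by blast
  have "(\<lambda>i. m i + v i) \<in> mons n" using mv J by (simp add: is_mono_ideal_def subset_iff)
  then have "(\<lambda>i. weight_mon d m i + weight_mon d v i) \<in> ideal_of n (weight_mon d ` J)"
    using mv weight_mon_mem_ideal_of_iff[OF J d] by (simp add: weight_mon_add[symmetric])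
  moreover have "\<forall>i\<in>A. weight_mon d v i = 0" using v(2) by (simp add: weight_mon_def)
  ultimately show "weight_mon d m \<in> localize n A (ideal_of n (weight_mon d ` J))"
    unfolding localize_def using weight_mon_mons m v(1) by blast
next
  assume "weight_mon d m \<in> localize n A (ideal_of n (weight_mon d ` J))"
  then obtain v b where v: "v \<in> mons n" "\<forall>i\<in>A. v i = 0" and b: "b \<in> J"
    and le: "weight_mon d b \<le> (\<lambda>i. weight_mon d m i + v i)"
    unfolding localize_def ideal_of_def by blast
  have mv: "(\<lambda>i. m i + v i) \<in> mons n" using m v(1) by (simp add: mons_def)
  have "(\<lambda>i. weight_mon d m i + v i) \<le> weight_mon d (\<lambda>i. m i + v i)"
    using le_weight_mon[OF d v(1)] by (simp add: weight_mon_add le_fun_def)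
  then have "weight_mon d b \<le> weight_mon d (\<lambda>i. m i + v i)" by (rule order_trans[OF le])
  moreover have "b \<in> mons n" using b J by (simp add: is_mono_ideal_def subset_iff)
  ultimately have "b \<le> (\<lambda>i. m i + v i)" using weight_mon_le_iff[OF d] by simp
  then have "(\<lambda>i. m i + v i) \<in> J" using J b mv unfolding is_mono_ideal_def by blast
  then show "m \<in> localize n A J" unfolding localize_def using m v by blast
qed

lemma weight_mon_mem_primeA_iff:
  assumes d: "\<forall>i<n. 0 < d i" and m: "m \<in> mons n"
  shows "weight_mon d m \<in> primeA n A \<longleftrightarrow> m \<in> primeA n A"
proof -
  have "d i * m i \<noteq> 0 \<longleftrightarrow> m i \<noteq> 0" for i
    using d m by (cases "i < n") (auto simp: mons_def)
  then show ?thesis using m weight_mon_mons[OF m] by (simp add: primeA_def weight_mon_def)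
qed

lemma minprimes_ideal_of_weight_mon:
  assumes J: "J \<subseteq> mons n" and d: "\<forall>i<n. 0 < d i"
  shows "minprimes n (ideal_of n (weight_mon d ` J)) = minprimes n J"
proof -
  have "ideal_of n (weight_mon d ` J) \<subseteq> primeA n A \<longleftrightarrow> J \<subseteq> primeA n A" for A
  proof
    assume sub: "ideal_of n (weight_mon d ` J) \<subseteq> primeA n A"
    show "J \<subseteq> primeA n A"
    proof
      fix m assume "m \<in> J"
      then have "m \<in> mons n" "weight_mon d m \<in> ideal_of n (weight_mon d ` J)"
        using J weight_mon_mons unfolding ideal_of_def by blast+
      then show "m \<in> primeA n A" using sub weight_mon_mem_primeA_iff[OF d] by blast
    qed
  next
    assume sub: "J \<subseteq> primeA n A"
    show "ideal_of n (weight_mon d ` J) \<subseteq> primeA n A"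
    proof
      fix x assume "x \<in> ideal_of n (weight_mon d ` J)"
      then obtain b where "b \<in> J" "weight_mon d b \<le> x" "x \<in> mons n" unfolding ideal_of_def by blast
      moreover have "weight_mon d b \<in> primeA n A"
        using \<open>b \<in> J\<close> J sub weight_mon_mem_primeA_iff[OF d] by blast
      ultimately show "x \<in> primeA n A" using primeA_upward by blast
    qed
  qed
  then show ?thesis unfolding minprimes_def by (simp only:)
qed

lemma simis_of_simis_weighted:
  assumes J: "is_mono_ideal n J" and d: "\<forall>i<n. 0 < d i" and simis: "simis n (weighted n d J)"
  shows "simis n J"
  unfolding simis_def
proof (intro allI impI)
  fix s :: nat assume "1 \<le> s"
  define K where "K = ideal_of n (weight_mon d ` J)"
  have JK: "J \<subseteq> mons n" using J by (simp add: is_mono_ideal_def)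
  have Js: "is_mono_ideal n (mpow n J s)" using J by (rule is_mono_ideal_mpow)
  have Ks: "mpow n K s = ideal_of n (weight_mon d ` mpow n J s)"
    unfolding K_def using JK by (rule mpow_ideal_of_weight_mon)
  have minprimes_eq: "minprimes n K = minprimes n J"
    unfolding K_def using JK d by (rule minprimes_ideal_of_weight_mon)
  have "symb_pow n K s = mpow n K s"
    using simis \<open>1 \<le> s\<close> weighted_eq_ideal_of_weight_mon[OF J] by (simp add: simis_def K_def)
  show "symb_pow n J s = mpow n J s"
  proof
    show "symb_pow n J s \<subseteq> mpow n J s"
    proof
      fix m assume m: "m \<in> symb_pow n J s"
      then have mm: "m \<in> mons n" by (simp add: symb_pow_def)
      have "weight_mon d m \<in> localize n A (mpow n K s)" if "A \<in> minprimes n K" for A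
        using that m weight_mon_mem_localize_iff[OF Js d mm]
        by (simp add: Ks symb_pow_def minprimes_eq)
      then have "weight_mon d m \<in> symb_pow n K s"
        using weight_mon_mons[OF mm] unfolding symb_pow_def by blast
      then have "weight_mon d m \<in> mpow n K s" using \<open>symb_pow n K s = mpow n K s\<close> by simp
      then show "m \<in> mpow n J s" using weight_mon_mem_ideal_of_iff[OF Js d mm] Ks by simp
    qed
    have "mpow n J s \<subseteq> mons n" using Js by (simp add: is_mono_ideal_def)
    then show "mpow n J s \<subseteq> symb_pow n J s"
      using subset_localize unfolding symb_pow_def by blast
  qed
qed

section \<open>Irreducible components at minimal primes\<close>

lemma card_supp_1_iff: "card (supp p) = 1 \<longleftrightarrow> (\<exists>l. \<forall>i. p i \<noteq> 0 \<longleftrightarrow> i = l)"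
  by (auto simp: card_1_singleton_iff supp_def set_eq_iff)

lemma radical_ideal_of_pure_powers:
  assumes G: "G \<subseteq> mons n" and pure: "\<forall>p\<in>G. card (supp p) = 1"
  shows "radical n (ideal_of n G) = primeA n (\<Union>(supp ` G))"
proof
  show "radical n (ideal_of n G) \<subseteq> primeA n (\<Union>(supp ` G))"
  proof
    fix m assume "m \<in> radical n (ideal_of n G)"
    then obtain k p where m: "m \<in> mons n" and p: "p \<in> G" "\<And>i. p i \<le> k * m i"
      by (auto simp: radical_def ideal_of_def le_fun_def)
    obtain l where l: "\<And>i. p i \<noteq> 0 \<longleftrightarrow> i = l" using pure p(1) card_supp_1_iff by blast
    then have "m l \<noteq> 0" using p(2)[of l] by (metis mult_0_right le_zero_eq)
    then show "m \<in> primeA n (\<Union>(supp ` G))" using m p(1) l by (auto simp: primeA_def supp_def)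
  qed
  show "primeA n (\<Union>(supp ` G)) \<subseteq> radical n (ideal_of n G)"
  proof
    fix m assume "m \<in> primeA n (\<Union>(supp ` G))"
    then obtain p l where m: "m \<in> mons n" "m l \<noteq> 0" and p: "p \<in> G" "p l \<noteq> 0"
      by (auto simp: primeA_def supp_def)
    have pure_p: "p i = 0" if "i \<noteq> l" for i
      using pure p card_supp_1_iff[of p] that by metis
    have "p \<le> (\<lambda>i. p l * m i)"
      unfolding le_fun_def
    proof
      fix i show "p i \<le> p l * m i"
        using m(2) pure_p[of i] by (cases "i = l") auto
    qed
    moreover have "(\<lambda>i. p l * m i) \<in> mons n" using m(1) by (simp add: mons_def)
    ultimately have "(\<lambda>i. p l * m i) \<in> ideal_of n G" using p(1) unfolding ideal_of_def by blast
    moreover have "1 \<le> p l" using p(2) by simp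
    ultimately show "m \<in> radical n (ideal_of n G)" using m(1) unfolding radical_def by blast
  qed
qed

lemma subset_radical: "Q \<subseteq> mons n \<Longrightarrow> Q \<subseteq> radical n Q"
  by (auto simp: radical_def intro: exI[of _ 1])

lemma irreducible_monoE:
  assumes "irreducible_mono n Q"
  obtains G where "G \<subseteq> mons n" "\<forall>p\<in>G. card (supp p) = 1" "Q = ideal_of n G"
  using assms unfolding irreducible_mono_def by blast

lemma irreducible_mono_is_mono_ideal: "irreducible_mono n Q \<Longrightarrow> is_mono_ideal n Q"
  by (auto elim: irreducible_monoE simp: is_mono_ideal_ideal_of)

(* Prime avoidance for monomial ideals: the sum of witnesses lies in every ideal. *)
lemma prime_avoidance_primeA:
  assumes fin: "finite QQ" and mono: "\<forall>Q\<in>QQ. is_mono_ideal n Q"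
    and avoid: "\<forall>Q\<in>QQ. \<not> Q \<subseteq> primeA n A"
  obtains v where "v \<in> mons n" "\<forall>i\<in>A. v i = 0" "\<forall>Q\<in>QQ. v \<in> Q"
proof -
  have "\<forall>Q\<in>QQ. \<exists>m. m \<in> Q \<and> m \<notin> primeA n A" using avoid by blast
  then obtain w where w: "\<forall>Q\<in>QQ. w Q \<in> Q \<and> w Q \<notin> primeA n A"
    by (rule bchoice[THEN exE])
  have w_mons: "w Q \<in> mons n" if "Q \<in> QQ" for Q
    using w mono that by (auto simp: is_mono_ideal_def)
  define v where "v = (\<lambda>i. \<Sum>Q\<in>QQ. w Q i)"
  have "v \<in> mons n" using w_mons by (simp add: v_def mons_def)
  moreover have "\<forall>i\<in>A. v i = 0" using w w_mons not_mem_primeA by (simp add: v_def)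
  moreover have "v \<in> Q" if "Q \<in> QQ" for Q
  proof -
    have "w Q \<le> v" unfolding v_def le_fun_def using fin that by (auto intro: member_le_sum)
    then show ?thesis using mono w that \<open>v \<in> mons n\<close> by (auto simp: is_mono_ideal_def)
  qed
  ultimately show ?thesis using that by blast
qed

lemma radical_component_at_minprime:
  assumes Q: "irreducible_mono n Q" and IQ: "I \<subseteq> Q" and QA: "Q \<subseteq> primeA n A"
    and A: "A \<in> minprimes n I"
  shows "radical n Q = primeA n A"
proof -
  obtain G where G: "G \<subseteq> mons n" "\<forall>p\<in>G. card (supp p) = 1" and Q_eq: "Q = ideal_of n G"
    using Q by (rule irreducible_monoE)
  have rad: "radical n Q = primeA n (\<Union>(supp ` G))"
    unfolding Q_eq using G by (rule radical_ideal_of_pure_powers)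
  have "\<Union>(supp ` G) \<subseteq> A"
  proof
    fix l assume "l \<in> \<Union>(supp ` G)"
    then obtain p where p: "p \<in> G" "p l \<noteq> 0" by (auto simp: supp_def)
    then have "p \<in> Q" using G(1) unfolding Q_eq ideal_of_def by blast
    then obtain i where "i \<in> A" "p i \<noteq> 0" using QA by (auto simp: primeA_def)
    then show "l \<in> A" using G(2) p card_supp_1_iff[of p] by metis
  qed
  moreover have "Q \<subseteq> mons n"
    using irreducible_mono_is_mono_ideal[OF Q] by (simp add: is_mono_ideal_def)
  then have "I \<subseteq> primeA n (\<Union>(supp ` G))" using IQ rad subset_radical by blast
  then have "\<not> \<Union>(supp ` G) \<subset> A" using A unfolding minprimes_def by blast
  ultimately show ?thesis using rad by blast
qed

lemma minprime_unique_component: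
  assumes fin: "finite QQ" and irr: "\<forall>Q\<in>QQ. irreducible_mono n Q" and I_eq: "I = mons n \<inter> \<Inter>QQ"
    and rad: "\<forall>Q1\<in>QQ. \<forall>Q2\<in>QQ. Q1 \<noteq> Q2 \<longrightarrow> radical n Q1 \<noteq> radical n Q2"
    and A: "A \<in> minprimes n I"
  obtains Q0 where "Q0 \<in> QQ" "Q0 \<subseteq> primeA n A" "\<forall>Q\<in>QQ - {Q0}. \<not> Q \<subseteq> primeA n A"
proof -
  have mono: "\<forall>Q\<in>QQ. is_mono_ideal n Q" using irr irreducible_mono_is_mono_ideal by blast
  have "\<exists>Q0\<in>QQ. Q0 \<subseteq> primeA n A"
  proof (rule ccontr)
    assume "\<not> (\<exists>Q0\<in>QQ. Q0 \<subseteq> primeA n A)"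
    then obtain v where v: "v \<in> mons n" "\<forall>i\<in>A. v i = 0" "\<forall>Q\<in>QQ. v \<in> Q"
      using prime_avoidance_primeA[OF fin mono] by blast
    then have "v \<in> I" unfolding I_eq by blast
    then have "v \<in> primeA n A" using A by (auto simp: minprimes_def)
    then show False using v(1,2) not_mem_primeA by blast
  qed
  then obtain Q0 where Q0: "Q0 \<in> QQ" "Q0 \<subseteq> primeA n A" by blast
  have rad_eq: "radical n Q = primeA n A" if "Q \<in> QQ" "Q \<subseteq> primeA n A" for Q
  proof -
    have "I \<subseteq> Q" using I_eq that(1) by blast
    with irr that show ?thesis using radical_component_at_minprime A by blast
  qed
  have "\<not> Q \<subseteq> primeA n A" if Q: "Q \<in> QQ - {Q0}" for Q
  proof
    assume "Q \<subseteq> primeA n A"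
    then have "radical n Q = radical n Q0" using rad_eq Q Q0 by simp
    then show False using rad Q Q0(1) by blast
  qed
  then show ?thesis using Q0 that by blast
qed

lemma component_subset_localize:
  assumes fin: "finite QQ" and mono: "\<forall>Q\<in>QQ. is_mono_ideal n Q" and I_eq: "I = mons n \<inter> \<Inter>QQ"
    and Q0: "Q0 \<in> QQ" and others: "\<forall>Q\<in>QQ - {Q0}. \<not> Q \<subseteq> primeA n A"
  shows "Q0 \<subseteq> localize n A I"
proof
  fix p assume p: "p \<in> Q0"
  have "finite (QQ - {Q0})" "\<forall>Q\<in>QQ - {Q0}. is_mono_ideal n Q" using fin mono by auto
  then obtain v where v: "v \<in> mons n" "\<forall>i\<in>A. v i = 0" "\<forall>Q\<in>QQ - {Q0}. v \<in> Q"
    using others by (rule prime_avoidance_primeA)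
  have p_mons: "p \<in> mons n" using p Q0 mono by (auto simp: is_mono_ideal_def)
  then have pv: "(\<lambda>i. p i + v i) \<in> mons n" using v(1) by (simp add: mons_def)
  have "(\<lambda>i. p i + v i) \<in> Q" if Q: "Q \<in> QQ" for Q
  proof (cases "Q = Q0")
    case True
    have "p \<le> (\<lambda>i. p i + v i)" by (simp add: le_fun_def)
    then show ?thesis using mono Q pv p True unfolding is_mono_ideal_def by blast
  next
    case False
    then have "v \<in> Q" using v(3) Q by blast
    moreover have "v \<le> (\<lambda>i. p i + v i)" by (simp add: le_fun_def)
    ultimately show ?thesis using mono Q pv unfolding is_mono_ideal_def by blast
  qed
  then have "(\<lambda>i. p i + v i) \<in> I" using pv unfolding I_eq by blast
  then show "p \<in> localize n A I" unfolding localize_def using p_mons v(1,2) by blast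
qed

lemma minprime_component:
  assumes mid: "minimal_irr_decomp n I" and A: "A \<in> minprimes n I"
  obtains G where "G \<subseteq> mons n" "\<forall>p\<in>G. card (supp p) = 1" "I \<subseteq> ideal_of n G"
    "G \<subseteq> localize n A I"
proof -
  obtain QQ where fin: "finite QQ" and irr: "\<forall>Q\<in>QQ. irreducible_mono n Q"
    and I_eq: "I = mons n \<inter> \<Inter>QQ"
    and rad: "\<forall>Q1\<in>QQ. \<forall>Q2\<in>QQ. Q1 \<noteq> Q2 \<longrightarrow> radical n Q1 \<noteq> radical n Q2"
    using mid unfolding minimal_irr_decomp_def by blast
  obtain Q0 where Q0: "Q0 \<in> QQ" "Q0 \<subseteq> primeA n A" "\<forall>Q\<in>QQ - {Q0}. \<not> Q \<subseteq> primeA n A"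
    using fin irr I_eq rad A by (rule minprime_unique_component)
  have "irreducible_mono n Q0" using irr Q0(1) by blast
  then obtain G where G: "G \<subseteq> mons n" "\<forall>p\<in>G. card (supp p) = 1" and Q0_eq: "Q0 = ideal_of n G"
    by (rule irreducible_monoE)
  have "\<forall>Q\<in>QQ. is_mono_ideal n Q" using irr irreducible_mono_is_mono_ideal by blast
  then have "Q0 \<subseteq> localize n A I"
    using fin I_eq Q0(1,3) by (intro component_subset_localize)
  moreover have "G \<subseteq> Q0" using G(1) unfolding Q0_eq ideal_of_def by blast
  moreover have "I \<subseteq> ideal_of n G" using I_eq Q0(1) Q0_eq by blast
  ultimately show ?thesis using G that by blast
qed

(* The monomial below is g h / x_i. At a minimal prime both factors can be replaced by pure
   powers from its irreducible component; if both are powers of x_i, the one dividing g can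
   be squared because g i < h i. *)
lemma shifted_product_mem_symb_pow_two:
  assumes mid: "minimal_irr_decomp n I" and I: "is_mono_ideal n I"
    and g: "g \<in> I" and h: "h \<in> I" and gi: "0 < g i" and lt: "g i < h i"
  shows "(\<lambda>l. if l = i then g l + h l - 1 else g l + h l) \<in> symb_pow n I 2"
    (is "?m \<in> _")
proof (rule mem_symb_pow_twoI[OF I])
  have "g \<in> mons n" "h \<in> mons n" using g h I by (auto simp: is_mono_ideal_def)
  moreover have "i < n" using \<open>g \<in> mons n\<close> gi by (auto simp: mons_def not_less[symmetric])
  ultimately show "?m \<in> mons n" by (simp add: mons_def)
next
  fix A assume A: "A \<in> minprimes n I"
  obtain G where G: "G \<subseteq> mons n" "\<forall>p\<in>G. card (supp p) = 1" "I \<subseteq> ideal_of n G"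
    "G \<subseteq> localize n A I"
    by (rule minprime_component[OF mid A])
  obtain p q where p: "p \<in> G" "p \<le> g" and q: "q \<in> G" "q \<le> h"
    using G(3) g h unfolding ideal_of_def by blast
  have pq: "p l \<le> g l" "q l \<le> h l" for l using p(2) q(2) by (auto simp: le_fun_def)
  show "\<exists>a b. a \<in> localize n A I \<and> b \<in> localize n A I \<and> (\<lambda>l. a l + b l) \<le> ?m"
  proof (cases "p i = 0 \<or> q i = 0")
    case True
    have "(\<lambda>l. p l + q l) \<le> ?m"
      unfolding le_fun_def
    proof
      fix l show "p l + q l \<le> ?m l" using True pq[of l] gi lt by (cases "l = i") auto
    qed
    then show ?thesis using p(1) q(1) G(4) by blast
  next
    case False
    then have "p l = 0" if "l \<noteq> i" for l
      using G(2) p(1) card_supp_1_iff[of p] that by metis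
    then have "(\<lambda>l. p l + p l) \<le> ?m"
      unfolding le_fun_def using pq[of i] lt by auto
    then show ?thesis using p(1) G(4) by blast
  qed
qed

section \<open>Support-2 Simis ideals\<close>

lemma supp_eq_iff: "supp g = S \<Longrightarrow> g l \<noteq> 0 \<longleftrightarrow> l \<in> S"
  by (auto simp: supp_def)

lemma inj_on_supp_mingens:
  assumes S2: "support2 n I" and alpha: "\<forall>e\<in>edges I. \<forall>i j. e = {i, j} \<longrightarrow> alpha I i j = 1"
  shows "inj_on supp (mingens I)"
proof (rule inj_onI)
  fix g g' assume g: "g \<in> mingens I" and g': "g' \<in> mingens I" and eq: "supp g = supp g'"
  obtain i j where ij: "supp g = {i, j}"
    using S2 g unfolding support2_def card_2_iff by blast
  have "supp g \<in> edges I" using g unfolding edges_def by blast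
  then have "card {x \<in> mingens I. supp x = {i, j}} = 1"
    using alpha ij unfolding alpha_def by blast
  moreover have "g \<in> {x \<in> mingens I. supp x = {i, j}}" "g' \<in> {x \<in> mingens I. supp x = {i, j}}"
    using g g' ij eq by auto
  ultimately show "g = g'" by (metis card_1_singletonE singletonD)
qed

lemma mingen_eq_of_supp_subset:
  assumes S2: "support2 n I" and inj: "inj_on supp (mingens I)"
    and a: "a \<in> mingens I" and b: "b \<in> mingens I" and sub: "supp a \<subseteq> supp b"
  shows "a = b"
proof -
  have "card (supp a) = 2" "card (supp b) = 2" using S2 a b unfolding support2_def by blast+
  then have "supp a = supp b" using sub by (metis card_subset_eq card.infinite zero_neq_numeral)
  then show ?thesis using inj_onD[OF inj _ a b] by blast
qed

lemma card_2_subset_3: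
  assumes "S \<subseteq> {i, j, k}" and "card S = 2"
  shows "S = {i, j} \<or> S = {i, k} \<or> S = {j, k}"
proof -
  obtain x y where "S = {x, y}" "x \<noteq> y" using assms(2) unfolding card_2_iff by blast
  then show ?thesis using assms(1) by auto
qed

lemma shifted_product_factors_on_third_edge:
  assumes S2: "support2 n I" and inj: "inj_on supp (mingens I)"
    and g: "g \<in> mingens I" and h: "h \<in> mingens I"
    and sg: "supp g = {i, j}" and sh: "supp h = {i, k}"
    and a: "a \<in> mingens I" and b: "b \<in> mingens I"
    and ab: "\<And>l. a l + b l \<le> (if l = i then g l + h l - 1 else g l + h l)"
  shows "supp a = {j, k}"
proof -
  have g_nz: "g l \<noteq> 0 \<longleftrightarrow> l = i \<or> l = j" and h_nz: "h l \<noteq> 0 \<longleftrightarrow> l = i \<or> l = k" for l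
    using supp_eq_iff[OF sg] supp_eq_iff[OF sh] by auto
  have "supp a \<subseteq> {i, j, k}"
  proof
    fix l assume "l \<in> supp a"
    then have "a l \<noteq> 0" by (simp add: supp_def)
    then show "l \<in> {i, j, k}" using ab[of l] g_nz[of l] h_nz[of l] by (auto split: if_splits)
  qed
  moreover have "card (supp a) = 2" using S2 a by (simp add: support2_def)
  ultimately have "supp a = {i, j} \<or> supp a = {i, k} \<or> supp a = {j, k}"
    by (rule card_2_subset_3)
  then consider "supp a = {i, j}" | "supp a = {i, k}" | "supp a = {j, k}" by blast
  then show ?thesis
  proof cases
    case 1
    then have "a = g" using mingen_eq_of_supp_subset[OF S2 inj a g] sg by simp
    have "supp b \<subseteq> supp h"
    proof
      fix l assume "l \<in> supp b"
      then show "l \<in> supp h"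
        using ab[of l] h_nz[of l] \<open>a = g\<close> by (auto simp: supp_def split: if_splits)
    qed
    then have "b = h" using mingen_eq_of_supp_subset[OF S2 inj b h] by simp
    then show ?thesis using ab[of i] \<open>a = g\<close> g_nz[of i] by simp
  next
    case 2
    then have "a = h" using mingen_eq_of_supp_subset[OF S2 inj a h] sh by simp
    have "supp b \<subseteq> supp g"
    proof
      fix l assume "l \<in> supp b"
      then show "l \<in> supp g"
        using ab[of l] g_nz[of l] \<open>a = h\<close> by (auto simp: supp_def split: if_splits)
    qed
    then have "b = g" using mingen_eq_of_supp_subset[OF S2 inj b g] by simp
    then show ?thesis using ab[of i] \<open>a = h\<close> g_nz[of i] by simp
  qed
qed

(* g h / x_i lies in the second symbolic power, hence in I^2, and by the previous lemma the only
   way to write it as a product of two generators uses the generator on the third edge twice. *)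
lemma simis_triangle:
  assumes S2: "support2 n I" and simis: "simis n I" and mid: "minimal_irr_decomp n I"
    and inj: "inj_on supp (mingens I)"
    and g: "g \<in> mingens I" and h: "h \<in> mingens I"
    and sg: "supp g = {i, j}" and sh: "supp h = {i, k}" and jk: "j \<noteq> k" and lt: "g i < h i"
  shows "\<exists>f\<in>mingens I. supp f = {j, k} \<and> 2 * f j \<le> g j \<and> 2 * f k \<le> h k"
proof -
  have I: "is_mono_ideal n I" using S2 by (simp add: support2_def)
  have gI: "g \<in> I" and hI: "h \<in> I" using g h mingens_subset by blast+
  have "card {i, j} = 2" "card {i, k} = 2" using S2 g h sg sh unfolding support2_def by auto
  then have "j \<noteq> i" "k \<noteq> i" by auto
  then have "g i \<noteq> 0" "g k = 0" "h j = 0"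
    using supp_eq_iff[OF sg] supp_eq_iff[OF sh] jk by auto
  define m where "m = (\<lambda>l. if l = i then g l + h l - 1 else g l + h l)"
  have "m \<in> symb_pow n I 2"
    unfolding m_def using \<open>g i \<noteq> 0\<close> lt
    by (intro shifted_product_mem_symb_pow_two[OF mid I gI hI]) auto
  then have "m \<in> mprod I I" using simis by (simp add: simis_def mpow_two[OF I])
  then obtain x y where m_eq: "m = (\<lambda>l. x l + y l)" and "x \<in> I" "y \<in> I" by (auto simp: mprod_def)
  then obtain g1 g2 where g1: "g1 \<in> mingens I" "g1 \<le> x" and g2: "g2 \<in> mingens I" "g2 \<le> y"
    using exists_mingen_le[OF I] by blast
  have le12: "g1 l + g2 l \<le> m l" for l
    using g1(2) g2(2) unfolding m_eq le_fun_def by (simp add: add_mono)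
  have "supp g1 = {j, k}" "supp g2 = {j, k}"
    using shifted_product_factors_on_third_edge[OF S2 inj g h sg sh] g1(1) g2(1) le12
    unfolding m_def by (metis add.commute)+
  then have "g1 = g2" using inj_onD[OF inj _ g1(1) g2(1)] by simp
  moreover have "m j = g j" "m k = h k"
    using \<open>g k = 0\<close> \<open>h j = 0\<close> \<open>j \<noteq> i\<close> \<open>k \<noteq> i\<close> by (simp_all add: m_def)
  ultimately show ?thesis using g1(1) \<open>supp g1 = {j, k}\<close> le12[of j] le12[of k] by auto
qed

lemma card_2_memE:
  assumes "card S = 2" and "i \<in> S"
  obtains j where "S = {i, j}" and "j \<noteq> i"
  using assms by (auto simp: card_2_iff doubleton_eq_iff)

lemma mingens_common_exponent:
  assumes S2: "support2 n I" and simis: "simis n I" and mid: "minimal_irr_decomp n I"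
    and inj: "inj_on supp (mingens I)"
    and g: "g \<in> mingens I" and h: "h \<in> mingens I" and "g l \<noteq> 0" and "h l \<noteq> 0"
  shows "g l = h l"
proof -
  have "\<not> g l < h l"
    if g: "g \<in> mingens I" and h: "h \<in> mingens I" and "g l \<noteq> 0" "h l \<noteq> 0" for g h
  proof
    assume lt: "g l < h l"
    have "card (supp g) = 2" "card (supp h) = 2" using S2 g h by (auto simp: support2_def)
    moreover have "l \<in> supp g" "l \<in> supp h" using that(3,4) by (simp_all add: supp_def)
    ultimately obtain j k where sg: "supp g = {l, j}" and sh: "supp h = {l, k}" and "k \<noteq> l"
      by (metis card_2_memE)
    show False
    proof (cases "j = k")
      case True
      then have "g = h" using inj_onD[OF inj _ g h] sg sh by simp
      then show False using lt by simp
    next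
      case False
      then obtain f where f: "f \<in> mingens I" "supp f = {j, k}" "2 * f j \<le> g j"
        using simis_triangle[OF S2 simis mid inj g h sg sh _ lt] by blast
      then have "f j < g j" using supp_eq_iff[OF f(2), of j] by simp
      moreover have "supp g = {j, l}" using sg by auto
      ultimately obtain f' where f': "f' \<in> mingens I" "supp f' = {k, l}" "2 * f' l \<le> g l"
        using simis_triangle[OF S2 simis mid inj f(1) g f(2)] \<open>k \<noteq> l\<close> by blast
      have "f' = h" using inj_onD[OF inj _ f'(1) h] f'(2) sh by auto
      then show False using f'(3) lt by simp
    qed
  qed
  then show ?thesis using assms(5-) by (meson linorder_neqE_nat)
qed

definition sqfree_part :: "(nat \<Rightarrow> nat) \<Rightarrow> (nat \<Rightarrow> nat)" where
  "sqfree_part g = (\<lambda>i. if g i = 0 then 0 else 1)"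

lemma sqfree_part_mons: "g \<in> mons n \<Longrightarrow> sqfree_part g \<in> mons n"
  by (simp add: mons_def sqfree_part_def)

lemma le_sqfree_part_iff: "sqfree_part a \<le> sqfree_part b \<longleftrightarrow> supp a \<subseteq> supp b"
  by (auto simp: sqfree_part_def supp_def le_fun_def split: if_splits)

lemma exists_weight_of_common_exponents:
  assumes common: "\<And>g h i. g \<in> G \<Longrightarrow> h \<in> G \<Longrightarrow> g i \<noteq> 0 \<Longrightarrow> h i \<noteq> 0 \<Longrightarrow> g i = h i"
  obtains d where "\<forall>i. 0 < d i" and "\<forall>g\<in>G. weight_mon d (sqfree_part g) = g"
proof -
  define d where
    "d i = (if \<exists>g\<in>G. g i \<noteq> 0 then (SOME g. g \<in> G \<and> g i \<noteq> 0) i else 1)" for i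
  have d_eq: "d i = g i" if "g \<in> G" "g i \<noteq> 0" for g i
  proof -
    define g0 where "g0 = (SOME g. g \<in> G \<and> g i \<noteq> 0)"
    have "g0 \<in> G \<and> g0 i \<noteq> 0" unfolding g0_def by (rule someI[of _ g]) (use that in simp)
    then have "g0 i = g i" using common[of g0 g i] that by blast
    moreover have "\<exists>g\<in>G. g i \<noteq> 0" using that by blast
    ultimately show ?thesis by (simp add: d_def g0_def)
  qed
  have "0 < d i" for i
  proof (cases "\<exists>g\<in>G. g i \<noteq> 0")
    case True
    then obtain g where "g \<in> G" "g i \<noteq> 0" by blast
    then show ?thesis using d_eq by simp
  qed (simp add: d_def)
  moreover have "weight_mon d (sqfree_part g) = g" if "g \<in> G" for g
    using d_eq[OF that] by (auto simp: weight_mon_def sqfree_part_def)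
  ultimately show ?thesis using that by blast
qed

lemma mingens_ideal_of_sqfree_parts:
  assumes S2: "support2 n I" and inj: "inj_on supp (mingens I)"
  shows "mingens (ideal_of n (sqfree_part ` mingens I)) = sqfree_part ` mingens I"
proof (rule mingens_ideal_of_antichain)
  have "mingens I \<subseteq> mons n" using S2 mingens_subset by (auto simp: support2_def is_mono_ideal_def)
  then show "sqfree_part ` mingens I \<subseteq> mons n" using sqfree_part_mons by blast
next
  fix x y assume "x \<in> sqfree_part ` mingens I" "y \<in> sqfree_part ` mingens I" "x \<le> y"
  then show "x = y" using le_sqfree_part_iff mingen_eq_of_supp_subset[OF S2 inj] by blast
qed

theorem lemma2p1:
  fixes n :: nat and I :: "(nat \<Rightarrow> nat) set"
  assumes "support2 n I"
    and "simis n I"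
    and "minimal_irr_decomp n I"
    and "\<forall>e\<in>edges I. \<forall>i j. e = {i, j} \<longrightarrow> alpha I i j = 1"
  shows "\<exists>J d. squarefree_mono n J \<and> simis n J \<and> (\<forall>i<n. d i > 0) \<and> I = weighted n d J"
proof -
  note S2 = assms(1) and simis = assms(2) and mid = assms(3)
  have I: "is_mono_ideal n I" using S2 by (simp add: support2_def)
  have inj: "inj_on supp (mingens I)" using S2 assms(4) by (rule inj_on_supp_mingens)
  obtain d where d_pos: "\<forall>i. 0 < d i" and d: "\<forall>g\<in>mingens I. weight_mon d (sqfree_part g) = g"
    using mingens_common_exponent[OF S2 simis mid inj] by (rule exists_weight_of_common_exponents)
  define J where "J = ideal_of n (sqfree_part ` mingens I)"
  have mingens_J: "mingens J = sqfree_part ` mingens I"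
    unfolding J_def using S2 inj by (rule mingens_ideal_of_sqfree_parts)
  have J: "is_mono_ideal n J" unfolding J_def by (rule is_mono_ideal_ideal_of)
  have "squarefree_mono n J"
    using J by (auto simp: squarefree_mono_def mingens_J sqfree_part_def)
  moreover have I_eq: "I = weighted n d J"
  proof -
    have "weighted n d J = ideal_of n ((\<lambda>g. weight_mon d (sqfree_part g)) ` mingens I)"
      by (simp add: weighted_def mingens_J image_image weight_mon_def[abs_def])
    also have "\<dots> = ideal_of n (mingens I)" using d by simp
    finally show ?thesis using ideal_of_mingens[OF I] by simp
  qed
  moreover have "\<forall>i<n. 0 < d i" using d_pos by blast
  moreover have "simis n J"
    using simis_of_simis_weighted[OF J \<open>\<forall>i<n. 0 < d i\<close>] simis I_eq by simp
  ultimately show ?thesis by blast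
qed

end
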